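(* Let $Y=\{(x,y)\in\mathbb{R}^2:(x/a)^2+y^2=1\}$ with $1<a\le\sqrt2$. The six vertices of the two inscribed equilateral triangles $\Delta_{(\pm a,0)}$ (those with a vertex at $(a,0)$, resp. $(-a,0)$, of side length $r_1=\frac{4\sqrt3 a}{a^2+3}$) are global minima of $s:Y\to\mathbb{R}$; the six vertices of the two inscribed equilateral triangles $\Delta_{(0,\pm1)}$ (with a vertex at $(0,1)$, resp. $(0,-1)$, of side length $r_2=\frac{4\sqrt3a^2}{3a^2+1}$) are global maxima of $s$; and $s$ has no other local extrema.
   Context: For $1<a\le\sqrt2$, every $p\in Y$ is a vertex of a unique equilateral triangle (Euclidean) inscribed in $Y$; $s(p)$ denotes its side length. Explicitly $\Delta_{(a,0)}$ has vertices $(a,0)$ and $\bigl(-\frac{3a-a^3}{a^2+3},\pm\frac{2\sqrt3a}{a^2+3}\bigr)$, $\Delta_{(-a,0)}$ is its reflection in the $y$-axis, $\Delta_{(0,1)}$ has vertices $(0,1)$ and $\bigl(\pm\frac{2\sqrt3a^2}{3a^2+1},-\frac{3a^2-1}{3a^2+1}\bigr)$, and $\Delta_{(0,-1)}$ is its reflection in the $x$-axis. *)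

theory Defs
  imports "HOL-Analysis.Analysis"
begin

text \<open>Points of the plane are pairs of reals; dist on real \<times> real is the Euclidean distance.\<close>

definition ellipseY :: "real \<Rightarrow> (real \<times> real) set" where
  "ellipseY a = {(x, y). (x / a)^2 + y^2 = 1}"

definition inscribed_equilateral :: "real \<Rightarrow> real \<times> real \<Rightarrow> real \<times> real \<Rightarrow> real \<times> real \<Rightarrow> bool" where
  "inscribed_equilateral a p q r \<longleftrightarrow>
     p \<in> ellipseY a \<and> q \<in> ellipseY a \<and> r \<in> ellipseY a \<and>
     p \<noteq> q \<and> q \<noteq> r \<and> r \<noteq> p \<and>
     dist p q = dist q r \<and> dist q r = dist r p"

definition side_s :: "real \<Rightarrow> real \<times> real \<Rightarrow> real" where
  "side_s a p = (THE l. \<exists>q r. inscribed_equilateral a p q r \<and> l = dist p q)"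

definition tri_a_vertices :: "real \<Rightarrow> (real \<times> real) set" where
  "tri_a_vertices a =
     {(a, 0), (-(3*a - a^3)/(a^2 + 3), 2* sqrt 3*a/(a^2 + 3)),
              (-(3*a - a^3)/(a^2 + 3), -(2* sqrt 3*a/(a^2 + 3))),
      (-a, 0), ((3*a - a^3)/(a^2 + 3), 2* sqrt 3*a/(a^2 + 3)),
              ((3*a - a^3)/(a^2 + 3), -(2* sqrt 3*a/(a^2 + 3)))}"

definition tri_1_vertices :: "real \<Rightarrow> (real \<times> real) set" where
  "tri_1_vertices a =
     {(0, 1), (2* sqrt 3*a^2/(3*a^2 + 1), -(3*a^2 - 1)/(3*a^2 + 1)),
              (-(2* sqrt 3*a^2/(3*a^2 + 1)), -(3*a^2 - 1)/(3*a^2 + 1)),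
      (0, -1), (2* sqrt 3*a^2/(3*a^2 + 1), (3*a^2 - 1)/(3*a^2 + 1)),
              (-(2* sqrt 3*a^2/(3*a^2 + 1)), (3*a^2 - 1)/(3*a^2 + 1))}"

definition local_min_on :: "(real \<times> real) set \<Rightarrow> (real \<times> real \<Rightarrow> real) \<Rightarrow> real \<times> real \<Rightarrow> bool" where
  "local_min_on S f p \<longleftrightarrow> p \<in> S \<and> (\<exists>e>0. \<forall>q\<in>S. dist q p < e \<longrightarrow> f p \<le> f q)"

definition local_max_on :: "(real \<times> real) set \<Rightarrow> (real \<times> real \<Rightarrow> real) \<Rightarrow> real \<times> real \<Rightarrow> bool" where
  "local_max_on S f p \<longleftrightarrow> p \<in> S \<and> (\<exists>e>0. \<forall>q\<in>S. dist q p < e \<longrightarrow> f q \<le> f p)"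

end

theory Submission
  imports Defs
begin

text \<open>
  Identify the plane with the complex numbers. Then Y is the level set
  P (z^2 + cnj z^2) + 2 Q z cnj z = 1 with P = (1 - a^2)/(4 a^2) and Q = (1 + a^2)/(4 a^2).
  Write an equilateral triangle as m + w, m + t w, m + t^2 w with t a primitive cube root of
  unity. Adding the three ellipse equations with weights 1, t^2, t leaves a linear equation for
  the centroid m, whose only solution for w = \<rho> e, |e| = 1, is m = \<rho> (\<kappa> cnj e^3 + \<gamma> e^3);
  conversely the three points so obtained always lie on one level set of the form. Hence the
  triangle with a vertex in direction V(e) = e + \<kappa> cnj e^3 + \<gamma> e^3 has that vertex at \<rho> V(e)
  and side sqrt 3 \<rho>, where \<rho>^-2 is the value of the form at V(e), an increasing affine function
  of Re (e^6). For a \<le> sqrt 2 the curve e \<mapsto> V(e) meets every ray from the origin exactly once,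
  so along the ellipse s is a strictly decreasing function of cos 6t, and it is extremal
  exactly where sin 6t = 0.
\<close>

section \<open>The ellipse in complex coordinates\<close>

definition ell_P :: "real \<Rightarrow> real" where "ell_P a = (1 - a^2) / (4*a^2)"
definition ell_Q :: "real \<Rightarrow> real" where "ell_Q a = (1 + a^2) / (4*a^2)"
definition ell_kappa :: "real \<Rightarrow> real" where "ell_kappa a = (a^2 - 1)^2 / (8*a^2)"
definition ell_gamma :: "real \<Rightarrow> real" where "ell_gamma a = (a^4 - 1) / (8*a^2)"

definition ell_form :: "real \<Rightarrow> complex \<Rightarrow> real" where
  "ell_form a z = (Re z / a)^2 + (Im z)^2"
definition ell_herm :: "real \<Rightarrow> complex \<Rightarrow> complex" where
  "ell_herm a z = of_real (ell_P a) * (z^2 + cnj z ^ 2) + 2 * of_real (ell_Q a) * z * cnj z"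

definition centre :: "real \<Rightarrow> complex \<Rightarrow> complex" where
  "centre a e = of_real (ell_kappa a) * cnj e ^ 3 + of_real (ell_gamma a) * e ^ 3"
definition vertex_dir :: "real \<Rightarrow> complex \<Rightarrow> complex" where
  "vertex_dir a e = e + centre a e"

lemma ell_herm_eq_form: assumes "a \<noteq> 0" shows "ell_herm a z = of_real (ell_form a z)"
proof -
  obtain x y where z: "z = Complex x y" by (cases z) auto
  show ?thesis unfolding z ell_herm_def ell_form_def ell_P_def ell_Q_def
    using assms by (simp add: complex_eq_iff power2_eq_square field_simps)
qed

lemma ell_form_scale: "ell_form a (of_real t * z) = t^2 * ell_form a z"
  unfolding ell_form_def by (simp add: power2_eq_square field_simps)

lemma ell_form_pos: assumes "a \<noteq> 0" "z \<noteq> 0" shows "ell_form a z > 0"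
proof -
  have "Re z \<noteq> 0 \<or> Im z \<noteq> 0" using assms(2) complex_eq_iff by force
  then show ?thesis unfolding ell_form_def using assms(1)
    by (auto simp add: add_pos_nonneg add_nonneg_pos)
qed

lemma ell_form_ray_unique:
  assumes "a \<noteq> 0" "ell_form a (of_real t * z) = 1" "ell_form a (of_real s * z) = 1" "t > 0" "s > 0"
  shows "t = s"
proof -
  have "z \<noteq> 0" using assms(2) unfolding ell_form_def by auto
  then have pos: "ell_form a z > 0" using ell_form_pos assms(1) by blast
  have "t^2 * ell_form a z = s^2 * ell_form a z" using assms(2,3) unfolding ell_form_scale by simp
  then have "t^2 = s^2" using pos by simp
  then show ?thesis using assms(4,5) by (simp add: power2_eq_iff)
qed

lemma ell_form_Complex_divide:
  assumes "a \<noteq> 0" "d \<noteq> 0" "x^2 + a^2 * y^2 = a^2 * d^2"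
  shows "ell_form a (Complex (x / d) (y / d)) = 1"
proof -
  have "ell_form a (Complex (x / d) (y / d)) = (x^2 + a^2 * y^2) / (a^2 * d^2)"
    unfolding ell_form_def using assms(1,2) by (simp add: power_divide field_simps)
  then show ?thesis using assms by simp
qed

lemma centre_equation:
  assumes "a \<noteq> 0"
  shows "of_real (ell_P a) * centre a e + of_real (ell_Q a) * cnj (centre a e)
       = - of_real (ell_P a / 2) * cnj e ^ 3"
proof -
  have kappa: "ell_P a * ell_kappa a + ell_Q a * ell_gamma a = - ell_P a / 2"
    unfolding ell_P_def ell_Q_def ell_gamma_def ell_kappa_def using assms
    by (simp add: field_simps) algebra
  have gamma: "ell_P a * ell_gamma a + ell_Q a * ell_kappa a = 0"
    unfolding ell_P_def ell_Q_def ell_gamma_def ell_kappa_def using assms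
    by (simp add: field_simps) algebra
  have "of_real (ell_P a) * centre a e + of_real (ell_Q a) * cnj (centre a e)
      = of_real (ell_P a * ell_kappa a + ell_Q a * ell_gamma a) * cnj e ^ 3
        + of_real (ell_P a * ell_gamma a + ell_Q a * ell_kappa a) * e ^ 3"
    unfolding centre_def by (simp add: algebra_simps)
  then show ?thesis unfolding kappa gamma by simp
qed

lemma ell_herm_centre_shift:
  assumes "a \<noteq> 0" "e * cnj e = 1" "u * cnj u = 1" "u^3 = e^3"
  shows "ell_herm a (centre a e + u) = ell_herm a (centre a e) + 2 * of_real (ell_Q a)"
proof -
  define m where "m = centre a e"
  define P where "P = (of_real (ell_P a) :: complex)"
  define Q where "Q = (of_real (ell_Q a) :: complex)"
  have X: "P * m + Q * cnj m = - (P/2) * cnj e ^ 3" unfolding m_def P_def Q_def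
    using centre_equation[OF assms(1)] by simp
  have Xc: "P * cnj m + Q * m = - (P/2) * e ^ 3"
    using arg_cong[OF X, of cnj] by (simp add: P_def Q_def)
  have u3: "cnj u ^ 3 = cnj e ^ 3" using arg_cong[OF assms(4), of cnj] by simp
  have "ell_herm a (m + u) = P * (m^2 + cnj m^2) + 2*Q*m*cnj m + 2 * Q * (u * cnj u)
        + P*(u^2 + cnj u^2) + 2*u*(P * m + Q * cnj m) + 2 * cnj u * (P * cnj m + Q * m)"
    unfolding ell_herm_def P_def Q_def by (simp add: algebra_simps power2_eq_square)
  also have "\<dots> = ell_herm a m + 2 * Q"
    unfolding X Xc using assms(3) u3 assms(4)
    unfolding ell_herm_def P_def[symmetric] Q_def[symmetric]
    by algebra
  finally show ?thesis unfolding m_def Q_def .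
qed

lemma ell_form_centre_shift:
  assumes "a \<noteq> 0" "cmod e = 1" "cmod u = 1" "u^3 = e^3"
  shows "ell_form a (centre a e + u) = ell_form a (vertex_dir a e)"
proof -
  have e: "e * cnj e = 1" and u: "u * cnj u = 1"
    using assms(2,3) by (simp_all add: complex_norm_square[symmetric])
  have "complex_of_real (ell_form a (centre a e + u)) = of_real (ell_form a (centre a e + e))"
    using ell_herm_centre_shift[OF assms(1) e u assms(4)] ell_herm_centre_shift[OF assms(1) e e refl]
      ell_herm_eq_form[OF assms(1)] by simp
  then show ?thesis unfolding vertex_dir_def by (simp add: add.commute)
qed

definition to_complex :: "real \<times> real \<Rightarrow> complex" where
  "to_complex p = Complex (fst p) (snd p)"
definition of_complex :: "complex \<Rightarrow> real \<times> real" where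
  "of_complex z = (Re z, Im z)"

lemma of_complex_to_complex [simp]: "of_complex (to_complex p) = p"
  by (cases p) (simp add: of_complex_def to_complex_def)
lemma to_complex_of_complex [simp]: "to_complex (of_complex z) = z"
  by (simp add: of_complex_def to_complex_def)
lemma dist_of_complex: "dist (of_complex z) (of_complex w) = cmod (z - w)"
  by (simp add: of_complex_def dist_Pair_Pair dist_real_def cmod_def)
lemma dist_eq_cmod_to_complex: "dist p q = cmod (to_complex p - to_complex q)"
  using dist_of_complex[of "to_complex p" "to_complex q"] by simp
lemma of_complex_in_ellipseY: "of_complex z \<in> ellipseY a \<longleftrightarrow> ell_form a z = 1"
  by (simp add: ellipseY_def of_complex_def ell_form_def)
lemma in_ellipseY_iff: "p \<in> ellipseY a \<longleftrightarrow> ell_form a (to_complex p) = 1"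
  using of_complex_in_ellipseY[of "to_complex p"] by simp

section \<open>Inscribed equilateral triangles\<close>

lemma equilateral_triangle_rotation:
  fixes p q r :: complex
  assumes "p \<noteq> q" "cmod (p - q) = cmod (q - r)" "cmod (q - r) = cmod (r - p)"
  obtains m w t where "t^2 + t + 1 = 0" "cnj t = t^2" "w \<noteq> 0"
    "p = m + w" "q = m + t * w" "r = m + t^2 * w" "cmod (p - q) = sqrt 3 * cmod w"
proof -
  define d where "d = q - p"
  have "d \<noteq> 0" using assms(1) unfolding d_def by simp
  have rp: "cmod (r - p) = cmod d" and rq: "cmod (r - q) = cmod d"
    using assms(2,3) by (simp_all add: d_def norm_minus_commute)
  define z where "z = (r - p) / d"
  have "cmod z = 1" unfolding z_def using rp \<open>d \<noteq> 0\<close> by (simp add: norm_divide)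
  moreover have "z - 1 = (r - q) / d" unfolding z_def d_def using \<open>d \<noteq> 0\<close>
    unfolding d_def by (simp add: field_simps)
  then have "cmod (z - 1) = 1" using rq \<open>d \<noteq> 0\<close> by (simp add: norm_divide)
  moreover obtain x y where zxy: "z = Complex x y" by (cases z) auto
  ultimately have "x^2 + y^2 = 1" "(x - 1)^2 + y^2 = 1" unfolding cmod_def by simp_all
  then have x: "x = 1/2" by (simp add: power2_eq_square algebra_simps)
  with \<open>x^2 + y^2 = 1\<close> have y: "y * y = 3/4" by (simp add: power2_eq_square)
  have zq: "z^2 - z + 1 = 0" unfolding zxy x by (simp add: complex_eq_iff power2_eq_square y)
  have zc: "cnj z = 1 - z" unfolding zxy x by (simp add: complex_eq_iff)
  define t where "t = z^2"
  \<comment> \<open>an abstract c with 3 c = 1 in place of 1/3 keeps the identities below within reach of algebra\<close>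
  define c :: complex where "c = 1/3"
  have c3: "3 * c = 1" unfolding c_def by simp
  define m where "m = p + d * (1 + z) * c"
  define w where "w = - d * (1 + z) * c"
  have t: "t^2 + t + 1 = 0" unfolding t_def using zq by algebra
  have tc: "cnj t = t^2" unfolding t_def using zq by (simp add: zc) algebra
  have "1 + z \<noteq> 0" unfolding zxy x by (simp add: complex_eq_iff)
  then have "w \<noteq> 0" unfolding w_def c_def using \<open>d \<noteq> 0\<close> by simp
  have "r = p + z * d" unfolding z_def using \<open>d \<noteq> 0\<close> by simp
  then have r: "r = m + t^2 * w" unfolding m_def w_def t_def using zq c3 by algebra
  have q: "q = m + t * w" unfolding m_def w_def t_def d_def using zq c3 by algebra
  have pqr: "p = m + w" "q = m + t * w" "r = m + t^2 * w" using q r by (simp_all add: m_def w_def)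
  have "complex_of_real ((cmod (1 - t))^2) = (1 - t) * cnj (1 - t)" by (rule complex_norm_square)
  also have "\<dots> = 3" using tc t by simp algebra
  finally have "(cmod (1 - t))^2 = 3" by (metis of_real_eq_iff of_real_numeral)
  then have "cmod (1 - t) = sqrt 3" by (metis norm_ge_zero real_sqrt_unique)
  moreover have "p - q = w * (1 - t)" unfolding pqr by (simp add: algebra_simps)
  ultimately have "cmod (p - q) = sqrt 3 * cmod w" by (simp add: norm_mult)
  with t tc \<open>w \<noteq> 0\<close> pqr show thesis by (rule that)
qed

lemma weighted_sum_identity:
  fixes P Q m cm w cw t :: complex
  assumes "t^2 + t + 1 = 0"
  shows "(P * ((m+w)^2 + (cm+cw)^2) + 2*Q*(m+w)*(cm+cw))
       + t^2 * (P * ((m+t*w)^2 + (cm+t^2*cw)^2) + 2*Q*(m+t*w)*(cm+t^2*cw))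
       + t * (P * ((m+t^2*w)^2 + (cm+t^4*cw)^2) + 2*Q*(m+t^2*w)*(cm+t^4*cw))
       = 3 * (P * cw^2 + 2*(P*m + Q*cm)*w)"
  using assms by algebra

lemma inscribed_centroid_equation:
  assumes "a \<noteq> 0" "t^2 + t + 1 = 0" "cnj t = t^2"
    "ell_form a (m + w) = 1" "ell_form a (m + t * w) = 1" "ell_form a (m + t^2 * w) = 1"
  shows "of_real (ell_P a) * cnj w ^ 2 + 2 * (of_real (ell_P a) * m + of_real (ell_Q a) * cnj m) * w = 0"
proof -
  define P where "P = complex_of_real (ell_P a)"
  define Q where "Q = complex_of_real (ell_Q a)"
  have tc2: "cnj (t^2) = t^4" using assms(3) by (simp flip: power_mult)
  have "ell_herm a (m + w) + t^2 * ell_herm a (m + t * w) + t * ell_herm a (m + t^2 * w)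
     = 3 * (P * cnj w ^ 2 + 2 * (P * m + Q * cnj m) * w)"
    unfolding ell_herm_def P_def[symmetric] Q_def[symmetric]
    using weighted_sum_identity[OF assms(2), of P m w "cnj m" "cnj w" Q] assms(3) tc2
    by (simp add: mult.assoc)
  moreover have "ell_herm a (m + w) + t^2 * ell_herm a (m + t * w) + t * ell_herm a (m + t^2 * w) = 0"
    using assms(2,4-6) ell_herm_eq_form[OF assms(1)] by (simp add: algebra_simps)
  ultimately have "3 * (P * cnj w ^ 2 + 2 * (P * m + Q * cnj m) * w) = 0" by simp
  then have "P * cnj w ^ 2 + 2 * (P * m + Q * cnj m) * w = 0" by (simp only: mult_eq_0_iff) simp
  then show ?thesis unfolding P_def Q_def .
qed

lemma ell_P_Q_conj_eq_zero:
  assumes "1 < a" "of_real (ell_P a) * y + of_real (ell_Q a) * cnj y = 0"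
  shows "y = 0"
proof (rule ccontr)
  assume "y \<noteq> 0"
  have "\<bar>1 - a^2\<bar> < 1 + a^2" using assms(1) by (simp add: abs_if)
  then have less: "\<bar>ell_P a\<bar> < ell_Q a"
    unfolding ell_P_def ell_Q_def using assms(1) by (simp add: abs_div divide_strict_right_mono)
  have "cmod (of_real (ell_P a) * y) = cmod (of_real (ell_Q a) * cnj y)"
    using assms(2) by (metis add_eq_0_iff norm_minus_cancel)
  then have "\<bar>ell_P a\<bar> = \<bar>ell_Q a\<bar>" using \<open>y \<noteq> 0\<close> by (simp add: norm_mult)
  then show False using less by simp
qed

lemma centroid_eq_centre:
  assumes "1 < a" "w \<noteq> 0"
    "of_real (ell_P a) * cnj w ^ 2 + 2 * (of_real (ell_P a) * m + of_real (ell_Q a) * cnj m) * w = 0"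
  shows "m = of_real (cmod w) * centre a (w / of_real (cmod w))"
proof -
  define P where "P = complex_of_real (ell_P a)"
  define Q where "Q = complex_of_real (ell_Q a)"
  define \<rho> where "\<rho> = cmod w"
  define e where "e = w / of_real \<rho>"
  have "\<rho> > 0" unfolding \<rho>_def using assms(2) by simp
  have we: "w = of_real \<rho> * e" unfolding e_def using \<open>\<rho> > 0\<close> by simp
  have "cmod e = 1" unfolding e_def \<rho>_def using assms(2) by (simp add: norm_divide)
  then have ece: "e * cnj e = 1" using complex_norm_square[of e] by simp
  have "of_real \<rho> * (P * of_real \<rho> * cnj e ^ 3 + 2 * (P * m + Q * cnj m)) = 0"
  proof -
    have "0 = (P * cnj w ^ 2 + 2 * (P * m + Q * cnj m) * w) * cnj e"
      using assms(3) unfolding P_def Q_def by simp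
    also have "\<dots> = of_real \<rho> * (P * of_real \<rho> * cnj e ^ 3 + 2 * (P * m + Q * cnj m) * (e * cnj e))"
      unfolding we by (simp add: power2_eq_square power3_eq_cube algebra_simps)
    finally show ?thesis unfolding ece by simp
  qed
  then have X: "2 * (P * m + Q * cnj m) = - (P * of_real \<rho> * cnj e ^ 3)"
    using \<open>\<rho> > 0\<close> by (simp add: add_eq_0_iff2 eq_neg_iff_add_eq_0)
  define y where "y = m - of_real \<rho> * centre a e"
  have c: "2 * (P * centre a e + Q * cnj (centre a e)) = - (P * cnj e ^ 3)"
    using centre_equation[of a e] assms(1) unfolding P_def Q_def by simp
  have "2 * (P * y + Q * cnj y)
      = 2 * (P * m + Q * cnj m) - of_real \<rho> * (2 * (P * centre a e + Q * cnj (centre a e)))"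
    unfolding y_def by (simp add: algebra_simps)
  also have "\<dots> = 0" unfolding X c by (simp add: algebra_simps)
  finally have "P * y + Q * cnj y = 0" by (simp only: mult_eq_0_iff) simp
  then have "y = 0" using ell_P_Q_conj_eq_zero[OF assms(1)] unfolding P_def Q_def by blast
  then show ?thesis unfolding y_def e_def \<rho>_def by simp
qed

lemma inscribed_vertex_on_ray:
  assumes "1 < a" "inscribed_equilateral a p q r"
  obtains e \<rho> where "cmod e = 1" "\<rho> > 0" "to_complex p = of_real \<rho> * vertex_dir a e"
    "dist p q = sqrt 3 * \<rho>"
proof -
  have "to_complex p \<noteq> to_complex q" using assms(2) unfolding inscribed_equilateral_def
    by (metis of_complex_to_complex)
  moreover have "cmod (to_complex p - to_complex q) = cmod (to_complex q - to_complex r)"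
    "cmod (to_complex q - to_complex r) = cmod (to_complex r - to_complex p)"
    using assms(2) unfolding inscribed_equilateral_def dist_eq_cmod_to_complex by auto
  ultimately obtain m w t where t: "t^2 + t + 1 = 0" "cnj t = t^2" and "w \<noteq> 0"
    and pqr: "to_complex p = m + w" "to_complex q = m + t * w" "to_complex r = m + t^2 * w"
    and side: "cmod (to_complex p - to_complex q) = sqrt 3 * cmod w"
    by (rule equilateral_triangle_rotation)
  have "ell_form a (m + w) = 1" "ell_form a (m + t * w) = 1" "ell_form a (m + t^2 * w) = 1"
    using assms(2) unfolding inscribed_equilateral_def in_ellipseY_iff pqr by auto
  then have "of_real (ell_P a) * cnj w ^ 2 + 2 * (of_real (ell_P a) * m + of_real (ell_Q a) * cnj m) * w = 0"
    using assms(1) by (intro inscribed_centroid_equation[OF _ t]) auto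
  then have "m = of_real (cmod w) * centre a (w / of_real (cmod w))"
    by (rule centroid_eq_centre[OF assms(1) \<open>w \<noteq> 0\<close>])
  then have "to_complex p = of_real (cmod w) * vertex_dir a (w / of_real (cmod w))"
    unfolding pqr vertex_dir_def using \<open>w \<noteq> 0\<close> by (simp add: algebra_simps)
  moreover have "cmod (w / of_real (cmod w)) = 1" using \<open>w \<noteq> 0\<close> by (simp add: norm_divide)
  moreover have "dist p q = sqrt 3 * cmod w" using side by (simp add: dist_eq_cmod_to_complex)
  ultimately show thesis using that[of "w / of_real (cmod w)" "cmod w"] \<open>w \<noteq> 0\<close> by simp
qed

section \<open>The side length as a function of the vertex direction\<close>

definition ell_A :: "real \<Rightarrow> real" where
  "ell_A a = ell_P a * ((ell_kappa a)^2 + (ell_gamma a)^2) + 2 * ell_Q a * ell_kappa a * ell_gamma a"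
definition ell_B :: "real \<Rightarrow> real" where
  "ell_B a = 4 * ell_P a * ell_kappa a * ell_gamma a + 2 * ell_Q a * ((ell_kappa a)^2 + (ell_gamma a)^2)"

definition vertex_form :: "real \<Rightarrow> real \<Rightarrow> real" where
  "vertex_form a c = 2 * c * ell_A a + ell_B a + 2 * ell_Q a"

lemma ell_herm_centre:
  assumes "e * cnj e = 1"
  shows "ell_herm a (centre a e) = (e^6 + cnj e^6) * of_real (ell_A a) + of_real (ell_B a)"
proof -
  define k where "k = complex_of_real (ell_kappa a)"
  define g where "g = complex_of_real (ell_gamma a)"
  define P where "P = complex_of_real (ell_P a)"
  define Q where "Q = complex_of_real (ell_Q a)"
  define ce where "ce = cnj e"
  have "ell_herm a (centre a e) = P * ((k * ce^3 + g * e^3)^2 + (k * e^3 + g * ce^3)^2)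
      + 2 * Q * (k * ce^3 + g * e^3) * (k * e^3 + g * ce^3)"
    unfolding ell_herm_def centre_def k_def g_def P_def Q_def ce_def by simp
  also have "\<dots> = (e^6 + ce^6) * (P * (k^2 + g^2) + 2 * Q * k * g) + (4 * P * k * g + 2 * Q * (k^2 + g^2))"
    using assms unfolding ce_def[symmetric] by algebra
  finally show ?thesis unfolding ell_A_def ell_B_def k_def g_def P_def Q_def ce_def by simp
qed

lemma ell_form_vertex_dir:
  assumes "a \<noteq> 0" "cmod e = 1"
  shows "ell_form a (vertex_dir a e) = vertex_form a (Re (e^6))"
proof -
  have e: "e * cnj e = 1" using assms(2) by (simp add: complex_norm_square[symmetric])
  have "complex_of_real (ell_form a (vertex_dir a e)) = ell_herm a (centre a e + e)"
    unfolding vertex_dir_def ell_herm_eq_form[OF assms(1)] by (simp add: add.commute)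
  also have "\<dots> = ell_herm a (centre a e) + 2 * of_real (ell_Q a)"
    by (rule ell_herm_centre_shift[OF assms(1) e e refl])
  also have "\<dots> = complex_of_real (vertex_form a (Re (e^6)))"
  proof -
    have "e^6 + cnj e^6 = complex_of_real (2 * Re (e^6))" using complex_add_cnj[of "e^6"] by simp
    then show ?thesis unfolding ell_herm_centre[OF e] vertex_form_def by simp
  qed
  finally show ?thesis by (simp only: of_real_eq_iff)
qed

lemma ell_A_pos: assumes "1 < a" shows "ell_A a > 0"
proof -
  have "ell_A a = (a^2 - 1)^3 / (64 * a^4)"
    unfolding ell_A_def ell_P_def ell_Q_def ell_kappa_def ell_gamma_def using assms
    by (simp add: field_simps) algebra
  moreover have "(a^2 - 1)^3 > 0" using assms by (simp add: one_less_power)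
  ultimately show ?thesis using assms by simp
qed

lemma vertex_form_strict_mono: assumes "1 < a" "c < d" shows "vertex_form a c < vertex_form a d"
  unfolding vertex_form_def using ell_A_pos[OF assms(1)] assms(2) by simp

lemma vertex_form_one: assumes "a \<noteq> 0" shows "vertex_form a 1 = ((a^2 + 3) / (4*a))^2"
  unfolding vertex_form_def ell_A_def ell_B_def ell_P_def ell_Q_def ell_kappa_def ell_gamma_def
  using assms by (simp add: field_simps) algebra

lemma vertex_form_minus_one: assumes "a \<noteq> 0" shows "vertex_form a (-1) = ((3*a^2 + 1) / (4*a^2))^2"
  unfolding vertex_form_def ell_A_def ell_B_def ell_P_def ell_Q_def ell_kappa_def ell_gamma_def
  using assms by (simp add: field_simps) algebra

lemma vertex_form_pos: assumes "1 < a" "-1 \<le> c" shows "vertex_form a c > 0"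
proof -
  have "3*a^2 + 1 > 0" by (simp add: add_nonneg_pos)
  then have "vertex_form a (-1) > 0" using vertex_form_minus_one[of a] assms(1) by simp
  moreover have "vertex_form a (-1) \<le> vertex_form a c"
    using vertex_form_strict_mono[OF assms(1)] assms(2) by (cases "c = -1") (auto simp: less_eq_real_def)
  ultimately show ?thesis by linarith
qed

definition side_fn :: "real \<Rightarrow> real \<Rightarrow> real" where
  "side_fn a c = sqrt 3 / sqrt (vertex_form a c)"

lemma side_fn_one: assumes "1 < a" shows "side_fn a 1 = 4 * sqrt 3 * a / (a^2 + 3)"
proof -
  have "sqrt (vertex_form a 1) = (a^2 + 3) / (4*a)"
    using vertex_form_one[of a] assms by (simp add: add_pos_nonneg)
  then show ?thesis unfolding side_fn_def by simp
qed

lemma side_fn_minus_one: assumes "1 < a" shows "side_fn a (-1) = 4 * sqrt 3 * a^2 / (3 * a^2 + 1)"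
proof -
  have "sqrt (vertex_form a (-1)) = (3*a^2 + 1) / (4*a^2)"
    using vertex_form_minus_one[of a] assms by (simp add: add_pos_nonneg)
  then show ?thesis unfolding side_fn_def by simp
qed

lemma side_fn_le_iff:
  assumes "1 < a" "-1 \<le> c" "-1 \<le> d"
  shows "side_fn a c \<le> side_fn a d \<longleftrightarrow> d \<le> c"
proof -
  have mono: "vertex_form a c \<le> vertex_form a d \<longleftrightarrow> c \<le> d" for c d
    using vertex_form_strict_mono[OF assms(1)] by (metis linorder_not_le order_le_less)
  have "0 < sqrt (vertex_form a c)" "0 < sqrt (vertex_form a d)" using vertex_form_pos assms by auto
  then have "side_fn a c \<le> side_fn a d \<longleftrightarrow> sqrt (vertex_form a d) \<le> sqrt (vertex_form a c)"
    unfolding side_fn_def by (simp add: field_simps)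
  also have "\<dots> \<longleftrightarrow> d \<le> c" using mono by simp
  finally show ?thesis .
qed

section \<open>The vertex map\<close>

lemma norm_centre_le: assumes "cmod e = 1" shows "cmod (centre a e) \<le> \<bar>ell_kappa a\<bar> + \<bar>ell_gamma a\<bar>"
proof -
  have "cmod (centre a e) \<le> cmod (of_real (ell_kappa a) * cnj e ^ 3) + cmod (of_real (ell_gamma a) * e ^ 3)"
    unfolding centre_def by (rule norm_triangle_ineq)
  also have "\<dots> = \<bar>ell_kappa a\<bar> + \<bar>ell_gamma a\<bar>" using assms by (simp add: norm_mult norm_power)
  finally show ?thesis .
qed

lemma vertex_dir_coords:
  "Re (vertex_dir a (Complex x y)) = x + (ell_kappa a + ell_gamma a) * (x^3 - 3*x*y^2)"
  "Im (vertex_dir a (Complex x y)) = y + (ell_gamma a - ell_kappa a) * (3*x^2*y - y^3)"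
  unfolding vertex_dir_def centre_def by (simp_all add: power3_eq_cube power2_eq_square algebra_simps)

lemma vertex_dir_minus: "vertex_dir a (- e) = - vertex_dir a e"
  unfolding vertex_dir_def centre_def by (simp add: power3_eq_cube)

lemma vertex_dir_cnj: "vertex_dir a (cnj e) = cnj (vertex_dir a e)"
  unfolding vertex_dir_def centre_def by simp

text \<open>The cross product of V(e1) and V(e2) is that of e1 and e2 times a factor which, by the
  bounds on \<kappa> and \<gamma> that hold for a \<le> sqrt 2, is positive. So V(e1) and V(e2) are parallel
  only if e2 = \<plusminus>e1.\<close>
lemma cross_coords_factor:
  fixes x1 y1 x2 y2 k g :: real
  assumes "x1^2 + y1^2 = 1" "x2^2 + y2^2 = 1"
  shows "(x1 + (k+g)*(x1^3 - 3*x1*y1^2)) * (y2 + (g-k)*(3*x2^2*y2 - y2^3))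
       - (y1 + (g-k)*(3*x1^2*y1 - y1^3)) * (x2 + (k+g)*(x2^3 - 3*x2*y2^2)) =
     (x1*y2 - y1*x2) * (1 + (g^2 - k^2) * (3 - 4 * (x1*y2 - y1*x2)^2)
        + 4 * g * (x1*x2 + y1*y2) * (x1*x2 - y1*y2)
        - 2 * k * ((x1*x2 - y1*y2)^2 - (x1*y2 + y1*x2)^2))"
  using assms by algebra

lemma cross_factor_pos:
  fixes x1 y1 x2 y2 k g :: real
  assumes "x1^2 + y1^2 = 1" "x2^2 + y2^2 = 1" "0 \<le> k" "k \<le> 1/16" "k \<le> g" "g \<le> 3/16"
  shows "1 + (g^2 - k^2) * (3 - 4 * (x1*y2 - y1*x2)^2)
        + 4 * g * (x1*x2 + y1*y2) * (x1*x2 - y1*y2)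
        - 2 * k * ((x1*x2 - y1*y2)^2 - (x1*y2 + y1*x2)^2) > 0"
proof -
  define S where "S = x1*y2 - y1*x2"
  define C where "C = x1*x2 + y1*y2"
  define D where "D = x1*x2 - y1*y2"
  define T where "T = x1*y2 + y1*x2"
  have "C^2 + S^2 = (x1^2 + y1^2) * (x2^2 + y2^2)" "D^2 + T^2 = (x1^2 + y1^2) * (x2^2 + y2^2)"
    unfolding C_def S_def D_def T_def by algebra+
  then have CS: "C^2 + S^2 = 1" and DT: "D^2 + T^2 = 1" using assms(1,2) by simp_all
  have "C^2 \<le> 1" "D^2 \<le> 1" using CS DT zero_le_power2[of S] zero_le_power2[of T] by linarith+
  then have "\<bar>C\<bar> \<le> 1" "\<bar>D\<bar> \<le> 1" using abs_square_le_1 by blast+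
  then have "\<bar>C * D\<bar> \<le> 1" by (simp add: abs_mult mult_le_one)
  then have "-1 \<le> C * D" by linarith
  then have t2: "g * (C * D) \<ge> - g" using assms(3,5) mult_left_mono[of "-1" "C * D" g] by simp
  have "S^2 \<le> 1" using CS zero_le_power2[of C] by linarith
  then have "(g^2 - k^2) * (3 - 4*S^2) \<ge> (g^2 - k^2) * (-1)"
    using assms(3,5) by (intro mult_left_mono) (auto simp: power_mono)
  then have t1: "(g^2 - k^2) * (3 - 4*S^2) \<ge> k^2 - g^2" by simp
  have "D^2 - T^2 \<le> 1" using DT zero_le_power2[of T] by linarith
  then have t3: "k * (D^2 - T^2) \<le> k" using assms(3) by (simp add: mult_left_le)
  have "g^2 \<le> 9/256" using assms(3,5,6) power_mono[of g "3/16" 2] by (simp add: power2_eq_square)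
  then have "1 + (g^2 - k^2) * (3 - 4 * S^2) + 4 * (g * (C * D)) - 2 * (k * (D^2 - T^2)) > 0"
    using t1 t2 t3 assms(4,6) zero_le_power2[of k] by linarith
  then show ?thesis unfolding S_def C_def D_def T_def by (simp add: algebra_simps)
qed

definition omega :: complex where "omega = Complex (-1/2) (sqrt 3 / 2)"

lemma omega_cube: "omega^3 = 1"
  unfolding omega_def by (simp add: complex_eq_iff power3_eq_cube algebra_simps)
lemma norm_omega: "cmod omega = 1"
  unfolding omega_def cmod_def by (simp add: power_divide)
lemma norm_one_minus_omega: "cmod (1 - omega) = sqrt 3"
  unfolding omega_def cmod_def by (simp add: power_divide power2_eq_square)
lemma norm_one_plus_omega: "cmod (1 + omega) = 1"
  unfolding omega_def cmod_def by (simp add: power_divide power2_eq_square)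

definition tri_scale :: "real \<Rightarrow> complex \<Rightarrow> real" where
  "tri_scale a e = 1 / sqrt (ell_form a (vertex_dir a e))"
definition tri_vertex :: "real \<Rightarrow> complex \<Rightarrow> complex" where
  "tri_vertex a e = of_real (tri_scale a e) * vertex_dir a e"

definition vertex_arg :: "real \<Rightarrow> real \<Rightarrow> real" where
  "vertex_arg a t = t + Arg (cnj (cis t) * vertex_dir a (cis t))"

lemma tri_scale_minus: "tri_scale a (- e) = tri_scale a e"
  unfolding tri_scale_def vertex_dir_minus ell_form_def by (simp add: power2_eq_square)
lemma tri_scale_cnj: "tri_scale a (cnj e) = tri_scale a e"
  unfolding tri_scale_def vertex_dir_cnj ell_form_def by simp
lemma tri_vertex_minus: "tri_vertex a (- e) = - tri_vertex a e"
  unfolding tri_vertex_def tri_scale_minus vertex_dir_minus by simp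
lemma tri_vertex_cnj: "tri_vertex a (cnj e) = cnj (tri_vertex a e)"
  unfolding tri_vertex_def tri_scale_cnj vertex_dir_cnj by simp

locale moderate_ellipse =
  fixes a :: real
  assumes a_gt_1: "1 < a" and a_le_sqrt2: "a \<le> sqrt 2"
begin

lemma ell_coeff_bounds:
  "0 \<le> ell_kappa a" "ell_kappa a \<le> 1/16" "ell_kappa a \<le> ell_gamma a" "ell_gamma a \<le> 3/16"
proof -
  define b where "b = a^2"
  have b1: "1 < b" unfolding b_def using a_gt_1 by (simp add: one_less_power)
  have "a^2 \<le> (sqrt 2)^2" using a_gt_1 a_le_sqrt2 by (intro power_mono) auto
  then have b2: "b \<le> 2" unfolding b_def by simp
  have k: "ell_kappa a = (b - 1)^2 / (8*b)" unfolding ell_kappa_def b_def by simp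
  have g: "ell_gamma a = (b^2 - 1) / (8*b)" unfolding ell_gamma_def b_def by simp
  show "0 \<le> ell_kappa a" unfolding k using b1 by simp
  have "(2*b - 1) * (b - 2) \<le> 0" using b1 b2 by (intro mult_nonneg_nonpos) auto
  then have "2 * (b - 1)^2 \<le> b" by (simp add: power2_eq_square algebra_simps)
  then show "ell_kappa a \<le> 1/16" unfolding k using b1 by (simp add: field_simps)
  have "(b - 1)^2 \<le> b^2 - 1" using b1 by (simp add: power2_eq_square algebra_simps)
  then show "ell_kappa a \<le> ell_gamma a" unfolding k g using b1 by (simp add: divide_right_mono)
  have "(2*b + 1) * (b - 2) \<le> 0" using b1 b2 by (intro mult_nonneg_nonpos) auto
  then have "2 * (b^2 - 1) \<le> 3*b" by (simp add: power2_eq_square algebra_simps)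
  then show "ell_gamma a \<le> 3/16" unfolding g using b1 by (simp add: field_simps)
qed

lemma norm_centre_less_one: "cmod e = 1 \<Longrightarrow> cmod (centre a e) < 1"
  using norm_centre_le[of e a] ell_coeff_bounds by simp

lemma vertex_dir_nonzero: assumes "cmod e = 1" shows "vertex_dir a e \<noteq> 0"
proof
  assume "vertex_dir a e = 0"
  then have "cmod (centre a e) = cmod e" unfolding vertex_dir_def by (metis add_eq_0_iff norm_minus_cancel)
  then show False using norm_centre_less_one[OF assms] assms by simp
qed

lemma vertex_dir_parallel_imp:
  assumes "cmod e1 = 1" "cmod e2 = 1" "Im (cnj (vertex_dir a e1) * vertex_dir a e2) = 0"
  shows "e2 = e1 \<or> e2 = - e1"
proof -
  obtain x1 y1 x2 y2 where e: "e1 = Complex x1 y1" "e2 = Complex x2 y2"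
    by (metis complex.collapse)
  have u: "x1^2 + y1^2 = 1" "x2^2 + y2^2 = 1" using assms(1,2) unfolding e cmod_def by simp_all
  have "Re (vertex_dir a e1) * Im (vertex_dir a e2) - Im (vertex_dir a e1) * Re (vertex_dir a e2) = 0"
    using assms(3) by (simp add: algebra_simps)
  then have S: "x1*y2 - y1*x2 = 0"
    using cross_coords_factor[OF u, of "ell_kappa a" "ell_gamma a"]
      cross_factor_pos[OF u ell_coeff_bounds] unfolding e vertex_dir_coords
    by (simp add: add.commute)
  define C where "C = x1*x2 + y1*y2"
  have "C^2 + (x1*y2 - y1*x2)^2 = (x1^2 + y1^2) * (x2^2 + y2^2)" unfolding C_def by algebra
  then have "C = 1 \<or> C = -1" using S u by (simp add: power2_eq_1_iff)
  moreover have "x2 = C*x1" "y2 = C*y1" using S u unfolding C_def by algebra+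
  ultimately show ?thesis unfolding e by (auto simp: complex_eq_iff)
qed

lemma vertex_dir_ray_inj:
  assumes "cmod e1 = 1" "cmod e2 = 1" "r1 > 0" "r2 > 0"
    "of_real r1 * vertex_dir a e1 = of_real r2 * vertex_dir a e2"
  shows "r1 = r2"
proof -
  have "vertex_dir a e2 = of_real (r1 / r2) * vertex_dir a e1" using assms(4,5) by (simp add: field_simps)
  then have "Im (cnj (vertex_dir a e1) * vertex_dir a e2) = 0" by (simp add: algebra_simps)
  then have "e2 = e1 \<or> e2 = - e1" by (rule vertex_dir_parallel_imp[OF assms(1,2)])
  then have "of_real r1 * vertex_dir a e1 = of_real r2 * vertex_dir a e1 \<or>
      of_real (r1 + r2) * vertex_dir a e1 = 0"
    using assms(5) by (auto simp: vertex_dir_minus algebra_simps)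
  then show ?thesis using vertex_dir_nonzero[OF assms(1)] assms(3,4) by (auto simp flip: of_real_add)
qed

lemma ell_form_vertex_dir_pos: "cmod e = 1 \<Longrightarrow> ell_form a (vertex_dir a e) > 0"
  using ell_form_pos[of a "vertex_dir a e"] vertex_dir_nonzero a_gt_1 by simp

lemma tri_scale_pos: "cmod e = 1 \<Longrightarrow> tri_scale a e > 0"
  using ell_form_vertex_dir_pos unfolding tri_scale_def by simp

lemma ell_form_tri_scale:
  assumes "cmod e = 1" "ell_form a z = ell_form a (vertex_dir a e)"
  shows "ell_form a (of_real (tri_scale a e) * z) = 1"
  using ell_form_vertex_dir_pos[OF assms(1)] unfolding ell_form_scale tri_scale_def assms(2)
  by (simp add: power_divide)

lemma ell_form_tri_vertex: "cmod e = 1 \<Longrightarrow> ell_form a (tri_vertex a e) = 1"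
  unfolding tri_vertex_def by (rule ell_form_tri_scale) simp_all

lemma tri_vertex_inscribed:
  assumes "cmod e = 1"
  shows "\<exists>q r. inscribed_equilateral a (of_complex (tri_vertex a e)) q r
           \<and> dist (of_complex (tri_vertex a e)) q = sqrt 3 * tri_scale a e"
proof -
  define \<rho> where "\<rho> = tri_scale a e"
  define vertex where "vertex k = of_real \<rho> * (centre a e + e * omega ^ k)" for k :: nat
  have "\<rho> > 0" unfolding \<rho>_def by (rule tri_scale_pos[OF assms])
  have on_Y: "of_complex (vertex k) \<in> ellipseY a" for k
  proof -
    have "cmod (e * omega ^ k) = 1" using assms by (simp add: norm_mult norm_power norm_omega)
    moreover have "(omega ^ k)^3 = 1" by (metis omega_cube power_mult power_one mult.commute)
    then have "(e * omega ^ k)^3 = e^3" by (simp add: power_mult_distrib)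
    ultimately show ?thesis unfolding of_complex_in_ellipseY vertex_def \<rho>_def using a_gt_1
      by (intro ell_form_tri_scale assms ell_form_centre_shift) auto
  qed
  have "vertex 0 - vertex 1 = of_real \<rho> * e * (1 - omega)"
    "vertex 1 - vertex 2 = of_real \<rho> * e * omega * (1 - omega)"
    "vertex 2 - vertex 0 = - (of_real \<rho> * e * (1 + omega) * (1 - omega))"
    unfolding vertex_def by (simp_all add: algebra_simps power2_eq_square)
  then have sides: "cmod (vertex 0 - vertex 1) = sqrt 3 * \<rho>" "cmod (vertex 1 - vertex 2) = sqrt 3 * \<rho>"
    "cmod (vertex 2 - vertex 0) = sqrt 3 * \<rho>"
    using \<open>\<rho> > 0\<close> assms by (simp_all add: norm_mult norm_omega norm_one_minus_omega norm_one_plus_omega)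
  then have "of_complex (vertex j) \<noteq> of_complex (vertex k)" if "cmod (vertex j - vertex k) = sqrt 3 * \<rho>" for j k
    using that \<open>\<rho> > 0\<close> by (metis to_complex_of_complex mult_pos_pos real_sqrt_gt_0_iff zero_less_numeral
      right_minus_eq norm_zero less_irrefl)
  moreover have "tri_vertex a e = vertex 0" unfolding vertex_def tri_vertex_def vertex_dir_def \<rho>_def
    by (simp add: add.commute)
  ultimately have "inscribed_equilateral a (of_complex (tri_vertex a e)) (of_complex (vertex 1)) (of_complex (vertex 2))"
    using on_Y sides unfolding inscribed_equilateral_def dist_of_complex by simp
  moreover have "dist (of_complex (tri_vertex a e)) (of_complex (vertex 1)) = sqrt 3 * \<rho>"
    using sides \<open>tri_vertex a e = vertex 0\<close> by (simp add: dist_of_complex)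
  ultimately show ?thesis unfolding \<rho>_def by blast
qed

lemma side_s_tri_vertex: "cmod e = 1 \<Longrightarrow> side_s a (of_complex (tri_vertex a e)) = sqrt 3 * tri_scale a e"
  unfolding side_s_def
proof (rule the_equality)
  assume "cmod e = 1"
  then show "\<exists>q r. inscribed_equilateral a (of_complex (tri_vertex a e)) q r
      \<and> sqrt 3 * tri_scale a e = dist (of_complex (tri_vertex a e)) q"
    using tri_vertex_inscribed by metis
  fix l assume "\<exists>q r. inscribed_equilateral a (of_complex (tri_vertex a e)) q r
      \<and> l = dist (of_complex (tri_vertex a e)) q"
  then obtain q r where tr: "inscribed_equilateral a (of_complex (tri_vertex a e)) q r"
    and l: "l = dist (of_complex (tri_vertex a e)) q" by blast
  obtain e' \<rho> where "cmod e' = 1" "\<rho> > 0" and ray: "tri_vertex a e = of_real \<rho> * vertex_dir a e'"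
    and side: "dist (of_complex (tri_vertex a e)) q = sqrt 3 * \<rho>"
    using inscribed_vertex_on_ray[OF a_gt_1 tr] by (metis to_complex_of_complex)
  have "\<rho> = tri_scale a e"
    using vertex_dir_ray_inj[OF \<open>cmod e' = 1\<close> \<open>cmod e = 1\<close> \<open>\<rho> > 0\<close> tri_scale_pos[OF \<open>cmod e = 1\<close>]]
      ray unfolding tri_vertex_def by simp
  then show "l = sqrt 3 * tri_scale a e" using l side by simp
qed

lemma side_s_tri_vertex_eq: "cmod e = 1 \<Longrightarrow> side_s a (of_complex (tri_vertex a e)) = side_fn a (Re (e^6))"
  unfolding side_s_tri_vertex tri_scale_def side_fn_def
  using ell_form_vertex_dir[of a e] a_gt_1 by (simp add: real_sqrt_divide)

lemma Re_cnj_mult_vertex_dir_pos: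
  assumes "cmod e = 1" shows "Re (cnj e * vertex_dir a e) > 0"
proof -
  have "cnj e * vertex_dir a e = 1 + cnj e * centre a e"
    unfolding vertex_dir_def using assms complex_norm_square[of e] by (simp add: algebra_simps)
  moreover have "\<bar>Re (cnj e * centre a e)\<bar> < 1"
    using abs_Re_le_cmod[of "cnj e * centre a e"] norm_centre_less_one[OF assms] assms
    by (simp add: norm_mult)
  ultimately show ?thesis by simp
qed

lemma vertex_dir_cis_polar: "vertex_dir a (cis t) = rcis (cmod (vertex_dir a (cis t))) (vertex_arg a t)"
proof -
  define h where "h = cnj (cis t) * vertex_dir a (cis t)"
  have "vertex_dir a (cis t) = cis t * h" unfolding h_def by (simp add: cis_cnj cis_mult)
  also have "\<dots> = cis t * rcis (cmod h) (Arg h)" by (simp add: rcis_cmod_Arg)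
  also have "\<dots> = rcis (cmod (vertex_dir a (cis t))) (vertex_arg a t)"
    unfolding vertex_arg_def h_def[symmetric] by (simp add: h_def norm_mult rcis_def cis_mult algebra_simps)
  finally show ?thesis .
qed

lemma continuous_on_vertex_arg: "continuous_on S (vertex_arg a)"
proof -
  have "cnj (cis t) * vertex_dir a (cis t) \<notin> \<real>\<^sub>\<le>\<^sub>0" for t
    using Re_cnj_mult_vertex_dir_pos[of "cis t"] complex_nonpos_Reals_iff by fastforce
  then show ?thesis unfolding vertex_arg_def vertex_dir_def centre_def
    by (intro continuous_intros) auto
qed

lemma vertex_arg_0: "vertex_arg a 0 = 0" and vertex_arg_2pi: "vertex_arg a (2*pi) = 2*pi"
proof -
  have "vertex_dir a 1 = of_real (1 + ell_kappa a + ell_gamma a)"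
    unfolding vertex_dir_def centre_def by simp
  moreover have "\<not> 1 + ell_kappa a + ell_gamma a < 0" using ell_coeff_bounds by simp
  ultimately have "Arg (vertex_dir a 1) = 0" by (simp only: Arg_of_real if_False)
  then show "vertex_arg a 0 = 0" "vertex_arg a (2*pi) = 2*pi"
    unfolding vertex_arg_def by simp_all
qed

lemma tri_vertex_eqI:
  assumes "cmod e = 1" "ell_form a z = 1" "z = of_real t * vertex_dir a e" "t > 0"
  shows "tri_vertex a e = z"
proof -
  have "t = tri_scale a e"
    using a_gt_1 assms ell_form_tri_vertex[OF assms(1)] tri_scale_pos[OF assms(1)] unfolding tri_vertex_def
    by (intro ell_form_ray_unique[of a t "vertex_dir a e"]) auto
  then show ?thesis using assms(3) unfolding tri_vertex_def by simp
qed

lemma ellipseY_eq_tri_vertex_cis: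
  assumes "p \<in> ellipseY a"
  obtains t where "p = of_complex (tri_vertex a (cis t))"
proof -
  define z where "z = to_complex p"
  have z: "ell_form a z = 1" using assms unfolding z_def in_ellipseY_iff .
  then have "z \<noteq> 0" unfolding ell_form_def by auto
  obtain \<psi> where \<psi>: "0 \<le> \<psi>" "\<psi> < 2*pi" "z / of_real (cmod z) = Complex (cos \<psi>) (sin \<psi>)"
    using complex_unimodular_polar[of "z / of_real (cmod z)"] \<open>z \<noteq> 0\<close> by (auto simp: norm_divide)
  \<comment> \<open>vertex_arg a is a continuous argument of t \<mapsto> V(cis t), running from 0 to 2 pi\<close>
  obtain t where "vertex_arg a t = \<psi>"
    using IVT'[of "vertex_arg a" 0 \<psi> "2*pi"] vertex_arg_0 vertex_arg_2pi \<psi>(1,2) continuous_on_vertex_arg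
    by auto
  have u: "cis \<psi> = z / of_real (cmod z)" using \<psi>(3) by (simp add: complex_eq_iff)
  define r where "r = cmod (vertex_dir a (cis t))"
  have "r > 0" unfolding r_def using vertex_dir_nonzero[of "cis t"] by simp
  have "vertex_dir a (cis t) = of_real r * cis \<psi>"
    using vertex_dir_cis_polar[of t] unfolding r_def[symmetric] \<open>vertex_arg a t = \<psi>\<close> rcis_def .
  then have "z = of_real (cmod z / r) * vertex_dir a (cis t)"
    unfolding u using \<open>r > 0\<close> \<open>z \<noteq> 0\<close> by (simp add: field_simps)
  then have "tri_vertex a (cis t) = z"
    using z \<open>r > 0\<close> \<open>z \<noteq> 0\<close> by (intro tri_vertex_eqI[where t = "cmod z / r"]) auto
  then show thesis using that unfolding z_def by (metis of_complex_to_complex)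
qed

end

section \<open>Critical directions\<close>

definition cis_pi6 :: complex where "cis_pi6 = cis (pi/6)"
definition cis_pi3 :: complex where "cis_pi3 = cis (pi/3)"

lemma cis_pi6_eq: "cis_pi6 = Complex (sqrt 3 / 2) (1/2)"
  unfolding cis_pi6_def by (simp add: complex_eq_iff cos_30 sin_30)
lemma cis_pi3_eq: "cis_pi3 = Complex (1/2) (sqrt 3 / 2)"
  unfolding cis_pi3_def by (simp add: complex_eq_iff cos_60 sin_60)
lemma cis_pi6_cube: "cis_pi6 ^ 3 = \<i>"
  using Complex.DeMoivre[of "pi/6" 3] unfolding cis_pi6_def by simp
lemma cis_pi3_cube: "cis_pi3 ^ 3 = -1"
  using Complex.DeMoivre[of "pi/3" 3] unfolding cis_pi3_def by simp

text \<open>The vertex directions e of the triangles with a vertex at (\<plusminus>a, 0), resp. (0, \<plusminus>1), listed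
  in the order of the vertices in tri_a_vertices and tri_1_vertices.\<close>
definition vertex_dirs_a :: "complex set" where
  "vertex_dirs_a = {1, - cnj cis_pi3, - cis_pi3, -1, cis_pi3, cnj cis_pi3}"
definition vertex_dirs_1 :: "complex set" where
  "vertex_dirs_1 = {\<i>, cnj cis_pi6, - cis_pi6, - \<i>, cis_pi6, - cnj cis_pi6}"

lemma sin_six_eq_zero_imp_cis:
  assumes "sin (6*t) = 0"
  obtains m :: nat where "m < 12" "cis t = cis (real m * pi / 6)"
proof -
  obtain n :: int where n: "6*t = of_int n * pi" using assms sin_zero_iff_int2 by blast
  obtain m :: nat where m: "n mod 12 = int m" using nonneg_eq_int[of "n mod 12"] by auto
  have "m < 12" using m pos_mod_bound[of 12 n] by simp
  define k where "k = n div 12"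
  have nkm: "n = 12 * k + int m" unfolding k_def using div_mult_mod_eq[of n 12] m by linarith
  have t: "t = 2*pi * of_int k + real m * pi / 6" using n unfolding nkm by (simp add: field_simps)
  have "cis t = cis (2*pi * of_int k) * cis (real m * pi / 6)" unfolding t by (rule cis_mult[symmetric])
  also have "cis (2*pi * of_int k) = 1" by simp
  finally have "cis t = cis (real m * pi / 6)" by simp
  with \<open>m < 12\<close> show thesis using that by simp
qed

lemma cis_multiple_pi6_in_vertex_dirs:
  assumes "m < 12"
  shows "cis (real m * pi / 6) \<in> vertex_dirs_a \<union> vertex_dirs_1"
proof -
  have pi_plus: "cis (pi + x) = - cis x" and twopi_plus: "cis (2*pi + x) = cis x" for x
    by (simp_all flip: cis_mult)
  have neg: "cis (- x) = cnj (cis x)" for x by (simp add: cis_cnj)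
  have "cis (real m * pi / 6) \<in> {1, -1, cis_pi3, cnj cis_pi3, -cis_pi3, -cnj cis_pi3,
      \<i>, -\<i>, cis_pi6, cnj cis_pi6, -cis_pi6, -cnj cis_pi6}"
  proof -
    have "m = 0 \<or> m = 1 \<or> m = 2 \<or> m = 3 \<or> m = 4 \<or> m = 5 \<or> m = 6 \<or> m = 7
      \<or> m = 8 \<or> m = 9 \<or> m = 10 \<or> m = 11"
      using assms by presburger
    then consider "m = 0" | "m = 1" | "m = 2" | "m = 3" | "m = 4" | "m = 5" | "m = 6" | "m = 7"
      | "m = 8" | "m = 9" | "m = 10" | "m = 11" by blast
    then show ?thesis
    proof cases
      case 1 then show ?thesis by simp
    next
      case 2 then show ?thesis unfolding cis_pi6_def by simp
    next
      case 3 then have "real m * pi / 6 = pi/3" by simp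
      then show ?thesis unfolding cis_pi3_def by simp
    next
      case 4 then have "real m * pi / 6 = pi/2" by simp
      then show ?thesis by simp
    next
      case 5 then have "real m * pi / 6 = pi + - (pi/3)" by simp
      then show ?thesis unfolding cis_pi3_def by (simp only: pi_plus neg) simp
    next
      case 6 then have "real m * pi / 6 = pi + - (pi/6)" by simp
      then show ?thesis unfolding cis_pi6_def by (simp only: pi_plus neg) simp
    next
      case 7 then have "real m * pi / 6 = pi" by simp
      then show ?thesis by simp
    next
      case 8 then have "real m * pi / 6 = pi + pi/6" by simp
      then show ?thesis unfolding cis_pi6_def by (simp only: pi_plus) simp
    next
      case 9 then have "real m * pi / 6 = pi + pi/3" by simp
      then show ?thesis unfolding cis_pi3_def by (simp only: pi_plus) simp
    next
      case 10 then have "real m * pi / 6 = pi + pi/2" by simp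
      then show ?thesis by (simp only: pi_plus) simp
    next
      case 11 then have "real m * pi / 6 = 2*pi + - (pi/3)" by simp
      then show ?thesis unfolding cis_pi3_def by (simp only: twopi_plus neg) simp
    next
      case 12 then have "real m * pi / 6 = 2*pi + - (pi/6)" by simp
      then show ?thesis unfolding cis_pi6_def by (simp only: twopi_plus neg) simp
    qed
  qed
  then show ?thesis unfolding vertex_dirs_a_def vertex_dirs_1_def by auto
qed

lemma vertex_dirs_a_sixth: "e \<in> vertex_dirs_a \<Longrightarrow> cmod e = 1 \<and> Re (e^6) = 1"
proof -
  have "cis_pi3 ^ 6 = 1" using power_mult[of cis_pi3 3 2] cis_pi3_cube by simp
  then show "e \<in> vertex_dirs_a \<Longrightarrow> cmod e = 1 \<and> Re (e^6) = 1"
    unfolding vertex_dirs_a_def by (auto simp: cis_pi3_def simp flip: complex_cnj_power)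
qed

lemma vertex_dirs_1_sixth: "e \<in> vertex_dirs_1 \<Longrightarrow> cmod e = 1 \<and> Re (e^6) = -1"
proof -
  have "cis_pi6 ^ 6 = -1" using power_mult[of cis_pi6 3 2] cis_pi6_cube by simp
  moreover have "\<i> ^ 6 = (-1 :: complex)" using power_mult[of \<i> 2 3] by simp
  ultimately show "e \<in> vertex_dirs_1 \<Longrightarrow> cmod e = 1 \<and> Re (e^6) = -1"
    unfolding vertex_dirs_1_def by (auto simp: cis_pi6_def simp flip: complex_cnj_power)
qed

lemma local_extremum_along_path:
  fixes P :: "real \<Rightarrow> real \<times> real"
  assumes "isCont P t0" "\<And>t. P t \<in> S" "local_min_on S f (P t0) \<or> local_max_on S f (P t0)"
  shows "\<exists>d>0. (\<forall>t. \<bar>t0 - t\<bar> < d \<longrightarrow> f (P t0) \<le> f (P t))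
             \<or> (\<forall>t. \<bar>t0 - t\<bar> < d \<longrightarrow> f (P t) \<le> f (P t0))"
proof -
  obtain e where "e > 0" and e: "(\<forall>q\<in>S. dist q (P t0) < e \<longrightarrow> f (P t0) \<le> f q)
      \<or> (\<forall>q\<in>S. dist q (P t0) < e \<longrightarrow> f q \<le> f (P t0))"
    using assms(3) unfolding local_min_on_def local_max_on_def by blast
  obtain d where "d > 0" and "\<forall>t. dist t t0 < d \<longrightarrow> dist (P t) (P t0) < e"
    using assms(1) \<open>e > 0\<close> unfolding continuous_at_eps_delta by blast
  then have "\<forall>t. \<bar>t0 - t\<bar> < d \<longrightarrow> dist (P t) (P t0) < e" by (simp add: dist_real_def abs_minus_commute)
  then show ?thesis using e assms(2) \<open>d > 0\<close> by blast
qed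

context moderate_ellipse
begin

lemma tri_vertex_one: "tri_vertex a 1 = Complex a 0"
proof (rule tri_vertex_eqI)
  have "vertex_dir a 1 = of_real (1 + ell_kappa a + ell_gamma a)"
    unfolding vertex_dir_def centre_def by simp
  moreover have "1 + ell_kappa a + ell_gamma a > 0" using ell_coeff_bounds by simp
  ultimately show "Complex a 0 = of_real (a / (1 + ell_kappa a + ell_gamma a)) * vertex_dir a 1"
    by (simp add: complex_eq_iff)
  show "a / (1 + ell_kappa a + ell_gamma a) > 0" using \<open>_ > 0\<close> a_gt_1 by simp
  show "ell_form a (Complex a 0) = 1" unfolding ell_form_def using a_gt_1 by simp
qed simp

lemma tri_vertex_ii: "tri_vertex a \<i> = Complex 0 1"
proof (rule tri_vertex_eqI)
  have "vertex_dir a \<i> = Complex 0 (1 - (ell_gamma a - ell_kappa a))"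
    unfolding vertex_dir_def centre_def by (simp add: complex_eq_iff power3_eq_cube)
  moreover have "1 - (ell_gamma a - ell_kappa a) > 0" using ell_coeff_bounds by simp
  ultimately show "Complex 0 1 = of_real (1 / (1 - (ell_gamma a - ell_kappa a))) * vertex_dir a \<i>"
    by (simp add: complex_eq_iff)
  show "1 / (1 - (ell_gamma a - ell_kappa a)) > 0" using \<open>_ > 0\<close> by simp
  show "ell_form a (Complex 0 1) = 1" unfolding ell_form_def by simp
qed simp

lemma tri_vertex_cis_pi6:
  "tri_vertex a cis_pi6 = Complex (2 * sqrt 3 * a^2 / (3*a^2 + 1)) ((3*a^2 - 1) / (3*a^2 + 1))"
proof (rule tri_vertex_eqI)
  have a: "a \<noteq> 0" and d: "3*a^2 + 1 > 0" using a_gt_1 by (simp_all add: add_nonneg_pos)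
  have "vertex_dir a cis_pi6 = Complex (sqrt 3 / 2) (1/2 + (ell_gamma a - ell_kappa a))"
    unfolding vertex_dir_def centre_def complex_cnj_power[symmetric] cis_pi6_cube
    by (simp add: cis_pi6_eq complex_eq_iff)
  also have "1/2 + (ell_gamma a - ell_kappa a) = (3*a^2 - 1) / (4*a^2)"
    unfolding ell_gamma_def ell_kappa_def using a by (simp add: field_simps) algebra
  finally have V: "vertex_dir a cis_pi6 = Complex (sqrt 3 / 2) ((3*a^2 - 1) / (4*a^2))" .
  show "Complex (2 * sqrt 3 * a^2 / (3*a^2 + 1)) ((3*a^2 - 1) / (3*a^2 + 1))
      = of_real (4*a^2 / (3*a^2 + 1)) * vertex_dir a cis_pi6"
    unfolding V using a d by (simp add: complex_eq_iff)
  show "4*a^2 / (3*a^2 + 1) > 0" using a d by simp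
  show "ell_form a (Complex (2 * sqrt 3 * a^2 / (3*a^2 + 1)) ((3*a^2 - 1) / (3*a^2 + 1))) = 1"
    using a d by (intro ell_form_Complex_divide) (simp_all add: power_mult_distrib, algebra)
qed (simp add: cis_pi6_def)

lemma tri_vertex_cis_pi3:
  "tri_vertex a cis_pi3 = Complex ((3*a - a^3) / (a^2 + 3)) (2 * sqrt 3 * a / (a^2 + 3))"
proof (rule tri_vertex_eqI)
  have a: "a \<noteq> 0" and d: "a^2 + 3 > 0" using a_gt_1 by (simp_all add: add_nonneg_pos)
  have "vertex_dir a cis_pi3 = Complex (1/2 - (ell_kappa a + ell_gamma a)) (sqrt 3 / 2)"
    unfolding vertex_dir_def centre_def complex_cnj_power[symmetric] cis_pi3_cube
    by (simp add: cis_pi3_eq complex_eq_iff)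
  also have "1/2 - (ell_kappa a + ell_gamma a) = (3 - a^2) / 4"
    unfolding ell_gamma_def ell_kappa_def using a by (simp add: field_simps) algebra
  finally have V: "vertex_dir a cis_pi3 = Complex ((3 - a^2) / 4) (sqrt 3 / 2)" .
  show "Complex ((3*a - a^3) / (a^2 + 3)) (2 * sqrt 3 * a / (a^2 + 3))
      = of_real (4*a / (a^2 + 3)) * vertex_dir a cis_pi3"
    unfolding V using a d by (simp add: complex_eq_iff field_simps power3_eq_cube power2_eq_square)
  show "4*a / (a^2 + 3) > 0" using a_gt_1 d by simp
  show "ell_form a (Complex ((3*a - a^3) / (a^2 + 3)) (2 * sqrt 3 * a / (a^2 + 3))) = 1"
    using a d by (intro ell_form_Complex_divide) (simp_all add: power_mult_distrib, algebra)
qed (simp add: cis_pi3_def)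

lemma tri_a_vertices_eq: "tri_a_vertices a = (\<lambda>e. of_complex (tri_vertex a e)) ` vertex_dirs_a"
  unfolding tri_a_vertices_def vertex_dirs_a_def divide_minus_left
  by (simp add: tri_vertex_minus tri_vertex_cnj tri_vertex_one tri_vertex_cis_pi3 of_complex_def)

lemma tri_1_vertices_eq: "tri_1_vertices a = (\<lambda>e. of_complex (tri_vertex a e)) ` vertex_dirs_1"
  unfolding tri_1_vertices_def vertex_dirs_1_def divide_minus_left
  by (simp add: tri_vertex_minus tri_vertex_cnj tri_vertex_ii tri_vertex_cis_pi6 of_complex_def)

lemma side_s_cis: "side_s a (of_complex (tri_vertex a (cis t))) = side_fn a (cos (6*t))"
proof -
  have "Re (cis t ^ 6) = cos (6*t)" using Complex.DeMoivre[of t 6] by simp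
  then show ?thesis using side_s_tri_vertex_eq[of "cis t"] by simp
qed

lemma side_s_bounds:
  assumes "q \<in> ellipseY a"
  shows "side_fn a 1 \<le> side_s a q" "side_s a q \<le> side_fn a (-1)"
proof -
  obtain t where "q = of_complex (tri_vertex a (cis t))" using ellipseY_eq_tri_vertex_cis[OF assms] .
  then have q: "side_s a q = side_fn a (cos (6*t))" by (simp add: side_s_cis)
  show "side_fn a 1 \<le> side_s a q" "side_s a q \<le> side_fn a (-1)"
    unfolding q using side_fn_le_iff[OF a_gt_1] by simp_all
qed

lemma side_s_tri_a_vertices: "p \<in> tri_a_vertices a \<Longrightarrow> side_s a p = side_fn a 1"
  unfolding tri_a_vertices_eq using vertex_dirs_a_sixth side_s_tri_vertex_eq by auto

lemma side_s_tri_1_vertices: "p \<in> tri_1_vertices a \<Longrightarrow> side_s a p = side_fn a (-1)"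
  unfolding tri_1_vertices_eq using vertex_dirs_1_sixth side_s_tri_vertex_eq by auto

lemma continuous_tri_vertex_cis: "isCont (\<lambda>t. of_complex (tri_vertex a (cis t))) t"
proof -
  have "ell_form a (vertex_dir a (cis t)) \<noteq> 0" for t
    using ell_form_vertex_dir_pos[of "cis t"] by simp
  then have "continuous_on UNIV (\<lambda>t. of_complex (tri_vertex a (cis t)))"
    unfolding of_complex_def tri_vertex_def tri_scale_def vertex_dir_def centre_def ell_form_def
    using a_gt_1 by (intro continuous_intros) (auto simp: ell_form_def vertex_dir_def centre_def)
  then show ?thesis by (simp add: continuous_on_eq_continuous_at)
qed

lemma local_extremum_side_s_imp_vertex:
  assumes "p \<in> ellipseY a" "local_min_on (ellipseY a) (side_s a) p \<or> local_max_on (ellipseY a) (side_s a) p"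
  shows "p \<in> tri_a_vertices a \<union> tri_1_vertices a"
proof -
  define P where "P t = of_complex (tri_vertex a (cis t))" for t
  obtain t0 where p: "p = P t0" using ellipseY_eq_tri_vertex_cis[OF assms(1)] unfolding P_def .
  have "P t \<in> ellipseY a" for t unfolding P_def of_complex_in_ellipseY by (simp add: ell_form_tri_vertex)
  then obtain d where "d > 0" and "(\<forall>t. \<bar>t0 - t\<bar> < d \<longrightarrow> side_s a (P t0) \<le> side_s a (P t))
      \<or> (\<forall>t. \<bar>t0 - t\<bar> < d \<longrightarrow> side_s a (P t) \<le> side_s a (P t0))"
    using local_extremum_along_path[where P = P and S = "ellipseY a" and f = "side_s a"] continuous_tri_vertex_cis assms(2)
    unfolding P_def p by blast
  then have "(\<forall>t. \<bar>t0 - t\<bar> < d \<longrightarrow> cos (6*t) \<le> cos (6*t0))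
      \<or> (\<forall>t. \<bar>t0 - t\<bar> < d \<longrightarrow> cos (6*t0) \<le> cos (6*t))"
    unfolding P_def side_s_cis using side_fn_le_iff[OF a_gt_1] by simp
  moreover have deriv: "DERIV (\<lambda>t. cos (6*t)) t0 :> - sin (6*t0) * 6"
    by (auto intro!: derivative_eq_intros)
  ultimately have "- sin (6*t0) * 6 = 0"
    using DERIV_local_max[OF deriv \<open>d > 0\<close>] DERIV_local_min[OF deriv \<open>d > 0\<close>] by blast
  then have "sin (6*t0) = 0" by simp
  then obtain m where "m < 12" "cis t0 = cis (real m * pi / 6)" by (rule sin_six_eq_zero_imp_cis)
  then have "cis t0 \<in> vertex_dirs_a \<union> vertex_dirs_1" using cis_multiple_pi6_in_vertex_dirs by simp
  then show ?thesis unfolding p P_def tri_a_vertices_eq tri_1_vertices_eq by blast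
qed

end

theorem mainTheorem18:
  fixes a :: real
  assumes "1 < a" and "a \<le> sqrt 2"
  shows "(\<forall>p\<in>tri_a_vertices a. side_s a p = 4* sqrt 3*a/(a^2 + 3) \<and>
            (\<forall>q\<in>ellipseY a. side_s a p \<le> side_s a q))
       \<and> (\<forall>p\<in>tri_1_vertices a. side_s a p = 4* sqrt 3*a^2/(3*a^2 + 1) \<and>
            (\<forall>q\<in>ellipseY a. side_s a q \<le> side_s a p))
       \<and> (\<forall>p\<in>ellipseY a. (local_min_on (ellipseY a) (side_s a) p \<or> local_max_on (ellipseY a) (side_s a) p)
            \<longrightarrow> p \<in> tri_a_vertices a \<union> tri_1_vertices a)"
proof -
  interpret moderate_ellipse a using assms by unfold_locales
  show ?thesis
    using side_s_tri_a_vertices side_s_tri_1_vertices side_s_bounds side_fn_one[OF assms(1)]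
      side_fn_minus_one[OF assms(1)] local_extremum_side_s_imp_vertex
    by simp
qed
end
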